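(* Let $\varphi:(0,1)\to[0,\infty)$ satisfy (P1) $\int_0^1\varphi^2(y)\,dy<\infty$; (P2) $\varphi$ is discontinuous only on a set of Lebesgue measure zero; (P3) there is $a\in[0,1/2)$ such that $\varphi$ is nonincreasing on $(0,a)$, nondecreasing on $(1-a,1)$, and bounded on $(a,1-a)$; (P4) $\int_{1-x}^1\varphi(y)\,dy>0$ for all $x\in(0,1)$. Suppose $G$ is a distribution on $\mathbb{R}$ with a Lebesgue density $g$ satisfying $g(x)>0$ for all $x\in\mathbb{R}$. Then $$\widetilde\Gamma_{\varphi,\mathrm{unif}}\ge\liminf_{q\to\infty}\frac{g(q)}{g(-q)}.$$
   Context: $\widetilde\Gamma_{\varphi,\mathrm{unif}}:=\sup_{x\in(0,1)}\pi(x)/(1-\pi(x))$ (with the ratio read as $+\infty$ if $\pi(x)=1$), where $\pi(x)=\dfrac{\int_0^\infty\varphi(G(y)-G(-y))\mathbf{1}\{G(y)-G(-y)\ge1-x\}\,dG(y)}{\int_{1-x}^1\varphi(y)\,dy}$. Equivalently, $\widetilde\Gamma_{\varphi,\mathrm{unif}}$ is the design sensitivity, against i.i.d. pair differences with distribution $G$, of the uniform general signed rank test that rejects Rosenbaum's sensitivity null with parameter $\Gamma$ iff $T_n(x)\ge f_{\alpha,n}(x)$ for some $x\in(0,1)$, where $T_n(x)=\sum_{i=\lceil(1-x)(n+1)\rceil}^n\varphi(i/(n+1))\mathbf{1}\{Y_{(i)}>0\}$ (ordering by absolute value) and $f_{\alpha,n}(x)=\lambda_n^{-1}[\log(1/\alpha)+\sum_{i=\lceil(1-x)(n+1)\rceil}^n\log(1+\rho_\Gamma(e^{c_i\lambda_n}-1))]$,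 $c_i=\varphi(i/(n+1))$, $\rho_\Gamma=\Gamma/(1+\Gamma)$, $\lambda_n=\sqrt{2\log(1/\alpha)/\sigma_n^2(x_0)}$, $\sigma_n^2(x)=\rho_\Gamma(1-\rho_\Gamma)\sum_{i=\lceil(1-x)(n+1)\rceil}^nc_i^2$. *)

theory Defs
  imports "HOL-Analysis.Analysis"
begin

definition distG :: "(real \<Rightarrow> real) \<Rightarrow> real measure" where
  "distG g = density lebesgue (\<lambda>x. ennreal (g x))"

definition cdfG :: "(real \<Rightarrow> real) \<Rightarrow> real \<Rightarrow> real" where
  "cdfG g y = measure (distG g) {..y}"

definition pi_unif :: "(real \<Rightarrow> real) \<Rightarrow> (real \<Rightarrow> real) \<Rightarrow> real \<Rightarrow> real" where
  "pi_unif \<phi> g x =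
     (LINT y:{0<..}|distG g.
         \<phi> (cdfG g y - cdfG g (-y)) * indicator {t. cdfG g t - cdfG g (-t) \<ge> 1 - x} y)
     / (LINT y:{1-x<..<1}|lebesgue. \<phi> y)"

definition odds :: "real \<Rightarrow> ereal" where
  "odds p = (if p = 1 then \<infinity> else ereal (p / (1 - p)))"

definition Gamma_unif :: "(real \<Rightarrow> real) \<Rightarrow> (real \<Rightarrow> real) \<Rightarrow> ereal" where
  "Gamma_unif \<phi> g = (SUP x\<in>{0<..<1}. odds (pi_unif \<phi> g x))"

end

theory Submission
  imports Defs "HOL-Probability.Probability"
begin

(* Let Y have law G and put T(y) = G(|y|) - G(-|y|), the distribution function of |Y| at |y|.
   Since G has a positive density, this distribution function is continuous, so T(Y) is uniform
   on [0,1] and the denominator of pi(x) equals E[phi(T Y) 1{T Y >= 1 - x}] = N + M, where N and M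
   are the contributions of Y > 0 and Y < 0; thus pi(x) = N / (N + M).  For x small, T y >= 1 - x
   forces |y| beyond any prescribed q, and reflecting y to -y compares M with N pointwise:
   g(y) > c g(-y) for y >= q gives N >= c M, i.e. pi/(1 - pi) >= c for every c below the liminf. *)

lemma (in real_distribution) measure_cdf_le:
  assumes cont: "\<And>x. isCont (cdf M) x" and u: "0 < u" "u < 1"
  shows "measure M {x. cdf M x \<le> u} = u"
proof -
  let ?F = "cdf M"
  define S where "S = {x. ?F x \<le> u}"
  obtain a where a: "?F a < u"
    using order_tendstoD(2)[OF cdf_lim_at_bot u(1)] by (auto simp: eventually_at_bot_linorder)
  obtain b where b: "u < ?F b"
    using order_tendstoD(1)[OF cdf_lim_at_top_prob u(2)] by (auto simp: eventually_at_top_linorder)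
  have below_b: "x \<le> b" if "?F x \<le> u" for x
    using that b cdf_nondecreasing[of b x] by (cases "x \<le> b") auto
  obtain t where t: "?F t = u"
    using IVT'[of ?F a u b] a b below_b[of a] cont by (auto intro: continuous_at_imp_continuous_on)
  have bdd: "bdd_above S"
    using below_b by (auto simp: S_def bdd_above_def)
  define s where "s = Sup S"
  have "closed S"
    unfolding S_def by (intro closed_Collect_le continuous_at_imp_continuous_on ballI cont continuous_intros)
  then have "s \<in> S"
    unfolding s_def using t bdd by (intro closed_contains_Sup) (auto simp: S_def)
  moreover have "t \<le> s"
    unfolding s_def using t bdd by (intro cSup_upper) (auto simp: S_def)
  ultimately have Fs: "?F s = u"
    using cdf_nondecreasing[of t s] t by (auto simp: S_def)
  have "S = {..s}"
  proof (intro set_eqI iffI)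
    show "x \<in> {..s}" if "x \<in> S" for x
      using that bdd by (auto simp: s_def intro: cSup_upper)
    show "x \<in> S" if "x \<in> {..s}" for x
      using that Fs cdf_nondecreasing[of x s] by (auto simp: S_def)
  qed
  then show ?thesis
    using Fs by (simp add: S_def cdf_def2)
qed

lemma (in real_distribution) distr_cdf_uniform:
  assumes cont: "\<And>x. isCont (cdf M) x"
  shows "distr M borel (cdf M) = uniform_measure lborel {0..1}"
proof (rule cdf_unique)
  have cdf_borel[measurable]: "cdf M \<in> borel_measurable borel"
    by (intro borel_measurable_continuous_onI continuous_at_imp_continuous_on ballI cont)
  show "real_distribution (distr M borel (cdf M))"
    by simp
  show "real_distribution (uniform_measure lborel {0..1::real})"
    by (auto simp: real_distribution_def real_distribution_axioms_def intro: prob_space_uniform_measure)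
  have lower: "measure M {x. cdf M x \<le> u} = u" if "0 \<le> u" "u < 1" for u
  proof (cases "u = 0")
    case True
    have "measure M {x. cdf M x \<le> 0} \<le> v" if "0 < v" "v < 1" for v
    proof -
      have "measure M {x. cdf M x \<le> 0} \<le> measure M {x. cdf M x \<le> v}"
        using that by (intro finite_measure_mono) auto
      then show ?thesis
        using measure_cdf_le[OF cont that] by simp
    qed
    then have "measure M {x. cdf M x \<le> 0} \<le> 0"
      by (intro dense_ge_bounded[of 0 1]) auto
    then show ?thesis
      using True by (simp add: antisym)
  qed (use measure_cdf_le[OF cont] that in auto)
  show "cdf (distr M borel (cdf M)) = cdf (uniform_measure lborel {0..1})"
  proof
    fix u :: real
    have "cdf (distr M borel (cdf M)) u = measure M {x. cdf M x \<le> u}"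
      by (simp add: cdf_def2 measure_distr vimage_def)
    also have "\<dots> = measure lborel ({0..1} \<inter> {..u})"
    proof -
      consider "u < 0" | "0 \<le> u" "u < 1" | "1 \<le> u"
        by linarith
      then show ?thesis
      proof cases
        case 1
        then have "{x. cdf M x \<le> u} = {}" "{0..1} \<inter> {..u} = {}"
          by (auto dest: order_trans[OF cdf_nonneg])
        then show ?thesis
          by simp
      next
        case 2
        then have "{0..1} \<inter> {..u} = {0..u}"
          by auto
        then show ?thesis
          using lower[OF 2] 2 by simp
      next
        case 3
        then have "{x. cdf M x \<le> u} = UNIV" "{0..1} \<inter> {..u} = {0..1}"
          using cdf_bounded_prob by (auto intro: order_trans)
        then show ?thesis
          using prob_space by simp
      qed
    qed
    also have "\<dots> = cdf (uniform_measure lborel {0..1}) u"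
      by (simp add: cdf_def2)
    finally show "cdf (distr M borel (cdf M)) u = cdf (uniform_measure lborel {0..1}) u" .
  qed
qed

lemma le_odds_div_add:
  fixes c N M :: real
  assumes "0 \<le> M" "0 < N + M" "c * M \<le> N"
  shows "ereal c \<le> odds (N / (N + M))"
proof (cases "M = 0")
  case True
  then show ?thesis
    using assms by (simp add: odds_def)
next
  case False
  then have "1 - N / (N + M) = M / (N + M)" "N / (N + M) \<noteq> 1"
    using assms by (auto simp: field_simps)
  then have "odds (N / (N + M)) = ereal (N / M)"
    using assms False by (simp add: odds_def)
  moreover have "c \<le> N / M"
    using assms False by (simp add: pos_le_divide_eq)
  ultimately show ?thesis
    by simp
qed

lemma integral_lebesgue_split_reflect:
  fixes h :: "real \<Rightarrow> real"
  assumes h: "integrable lebesgue h"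
  shows "integral\<^sup>L lebesgue h = (LINT y:{0<..}|lebesgue. h y) + (LINT y:{0<..}|lebesgue. h (- y))"
proof -
  have h_meas: "h \<in> borel_measurable lebesgue"
    using h by (rule borel_measurable_integrable)
  have "AE y in lebesgue. y \<notin> {0}"
    by (rule AE_not_in) (simp add: null_sets_completionI)
  then have split_0: "AE y in lebesgue. h y = indicator {0<..} y * h y + indicator {..<0} y * h y"
    by eventually_elim (auto simp: indicator_def)
  then have "integral\<^sup>L lebesgue h
      = (\<integral>y. indicator {0<..} y * h y \<partial>lebesgue) + (\<integral>y. indicator {..<0} y * h y \<partial>lebesgue)"
    using integrable_mult_indicator[OF _ h, of "{0<..}"] integrable_mult_indicator[OF _ h, of "{..<0}"]
    by (subst integral_cong_AE[OF h_meas _ split_0]) (auto simp: h_meas)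
  also have "(\<integral>y. indicator {..<0} y * h y \<partial>lebesgue) = (\<integral>y. indicator {0<..} y * h (- y) \<partial>lebesgue)"
    using lebesgue_integral_real_affine[of "-1" "\<lambda>y. indicator {..<0} y * h y" 0]
    by (simp add: indicator_def)
  finally show ?thesis
    by (simp add: set_lebesgue_integral_def)
qed

lemma set_integrable_of_set_integral_nonzero:
  fixes f :: "'a \<Rightarrow> real"
  shows "(LINT x:A|M. f x) \<noteq> 0 \<Longrightarrow> set_integrable M A f"
  unfolding set_integrable_def set_lebesgue_integral_def using not_integrable_integral_eq by blast

lemma uniform_measure_unit_interval:
  "uniform_measure lborel {0..1::real} = density lborel (\<lambda>u. ennreal (indicator {0..1} u))"
  by (simp add: uniform_measure_def ennreal_indicator divide_ennreal_def)

locale positive_density =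
  fixes g :: "real \<Rightarrow> real"
  assumes g_measurable[measurable]: "g \<in> borel_measurable lebesgue"
    and g_pos: "\<And>x. 0 < g x"
    and distG_UNIV: "emeasure (distG g) UNIV = 1"
begin

lemma sets_distG[simp, measurable_cong]: "sets (distG g) = sets lebesgue"
  and space_distG[simp]: "space (distG g) = UNIV"
  by (simp_all add: distG_def)

lemma prob_space_distG: "prob_space (distG g)"
  by (rule prob_spaceI) (simp add: distG_UNIV)

lemma null_sets_distG: "null_sets (distG g) = null_sets lebesgue"
proof (intro set_eqI iffI)
  have *: "emeasure (distG g) A = 0 \<longleftrightarrow> emeasure lebesgue A = 0" if A: "A \<in> sets lebesgue" for A
  proof -
    have "emeasure (distG g) A = 0 \<longleftrightarrow> (AE x in lebesgue. ennreal (g x) * indicator A x = 0)"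
      using A by (simp add: distG_def emeasure_density nn_integral_0_iff_AE)
    also have "\<dots> \<longleftrightarrow> (AE x in lebesgue. x \<notin> A)"
      using g_pos by (intro AE_cong) (auto simp: indicator_def ennreal_eq_0_iff not_le[symmetric])
    also have "\<dots> \<longleftrightarrow> emeasure lebesgue A = 0"
      using A by (simp add: AE_iff_measurable[OF _ refl])
    finally show ?thesis .
  qed
  show "A \<in> null_sets lebesgue" if "A \<in> null_sets (distG g)" for A
    using that *[of A] by (auto simp: null_sets_def)
  show "A \<in> null_sets (distG g)" if "A \<in> null_sets lebesgue" for A
    using that *[of A] by (auto simp: null_sets_def)
qed

lemma measure_distG_null: "A \<in> null_sets lebesgue \<Longrightarrow> measure (distG g) A = 0"
  by (rule measure_eq_0_null_sets) (simp add: null_sets_distG)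

lemma measure_distG_greaterThan_pos: "0 < measure (distG g) {t<..}"
proof -
  interpret prob_space "distG g"
    by (rule prob_space_distG)
  have "emeasure lborel {t<..<t+1} \<le> emeasure lborel {t<..}"
    by (intro emeasure_mono) auto
  then have "{t<..} \<notin> null_sets lebesgue"
    by (auto simp: null_sets_completion_iff null_sets_def)
  then have "measure (distG g) {t<..} \<noteq> 0"
    by (auto simp: null_sets_distG[symmetric] emeasure_eq_measure)
  then show ?thesis
    using measure_nonneg[of "distG g" "{t<..}"] by linarith
qed

definition abs_law :: "real measure" where
  "abs_law = distr (distG g) borel abs"

(* For y > 0 this is G(y) - G(-y), the argument of phi in pi_unif (lemma cdfG_diff_eq_rank). *)
definition rank :: "real \<Rightarrow> real" where
  "rank y = cdf abs_law \<bar>y\<bar>"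

lemma abs_measurable_distG[measurable]: "abs \<in> distG g \<rightarrow>\<^sub>M borel"
  by (subst measurable_cong_sets[OF sets_distG refl]) (simp add: measurable_completion)

lemma real_distribution_abs_law: "real_distribution abs_law"
  unfolding abs_law_def
  by (intro prob_space.real_distribution_distr prob_space_distG abs_measurable_distG)

lemma measure_abs_law: "A \<in> sets borel \<Longrightarrow> measure abs_law A = measure (distG g) (abs -` A)"
  by (simp add: abs_law_def measure_distr)

lemma isCont_cdf_abs_law: "isCont (cdf abs_law) t"
proof -
  have "finite (abs -` {t} :: real set)"
    by (rule finite_subset[of _ "{t, -t}"]) auto
  then have "abs -` {t} \<in> null_sets lebesgue"
    by (intro null_sets_completionI finite_imp_null_set_lborel)
  then show ?thesis
    by (simp add: finite_borel_measure.isCont_cdf[OF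
        real_distribution.finite_borel_measure_M[OF real_distribution_abs_law]]
        measure_abs_law measure_distG_null)
qed

lemma cdf_abs_law: "0 \<le> t \<Longrightarrow> cdf abs_law t = cdfG g t - cdfG g (-t)"
proof -
  interpret prob_space "distG g"
    by (rule prob_space_distG)
  assume "0 \<le> t"
  then have "abs -` {..t} = {-t..t}" and split_t: "{..t} = {-t..t} \<union> {..<-t}"
    by auto
  have "measure (distG g) {..t} = measure (distG g) {-t..t} + measure (distG g) {..<-t}"
    unfolding split_t by (rule finite_measure_Union) auto
  moreover have "measure (distG g) {..-t} = measure (distG g) {..<-t} + measure (distG g) {-t}"
    unfolding ivl_disj_un(2)[symmetric] by (rule finite_measure_Union) auto
  moreover have "measure (distG g) {-t} = 0"
    by (simp add: measure_distG_null null_sets_completionI)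
  ultimately show ?thesis
    by (simp add: cdf_def2 cdfG_def measure_abs_law \<open>abs -` {..t} = {-t..t}\<close>)
qed

lemma cdf_abs_law_less_1: "cdf abs_law t < 1"
proof -
  interpret prob_space "distG g"
    by (rule prob_space_distG)
  have "cdf abs_law t \<le> measure (distG g) (UNIV - {\<bar>t\<bar><..})"
    by (auto simp: cdf_def2 measure_abs_law intro!: finite_measure_mono)
  also have "\<dots> < 1"
    using measure_distG_greaterThan_pos[of "\<bar>t\<bar>"] prob_compl[of "{\<bar>t\<bar><..}"] by simp
  finally show ?thesis .
qed

lemma cdf_abs_law_measurable[measurable]: "cdf abs_law \<in> borel_measurable borel"
  by (intro borel_measurable_continuous_onI continuous_at_imp_continuous_on ballI isCont_cdf_abs_law)

lemma rank_measurable[measurable]: "rank \<in> borel_measurable borel"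
  unfolding rank_def by measurable

lemma distr_rank: "distr (distG g) borel rank = uniform_measure lborel {0..1}"
proof -
  have "distr (distG g) borel rank = distr abs_law borel (cdf abs_law)"
    using distr_distr[OF cdf_abs_law_measurable abs_measurable_distG]
    by (simp add: abs_law_def[symmetric] rank_def[abs_def] comp_def)
  also have "\<dots> = uniform_measure lborel {0..1}"
    by (intro real_distribution.distr_cdf_uniform real_distribution_abs_law isCont_cdf_abs_law)
  finally show ?thesis .
qed

lemma rank_measurable_distG[measurable]: "rank \<in> distG g \<rightarrow>\<^sub>M borel"
  by (subst measurable_cong_sets[OF sets_distG refl]) (simp add: measurable_completion)

lemma AE_distG_rank: "(AE u in lborel. P u) \<Longrightarrow> AE y in distG g. P (rank y)"
proof -
  assume "AE u in lborel. P u"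
  then have "AE u in distr (distG g) borel rank. P u"
    unfolding distr_rank by (intro AE_uniform_measureI) (auto elim: eventually_mono)
  then show ?thesis
    by (rule AE_distrD[OF rank_measurable_distG])
qed

(* Composition with rank preserves Lebesgue measurability because rank pulls null sets back to
   null sets: it pushes distG g to the uniform law, and distG g has the null sets of lebesgue. *)
lemma rank_measurable_lebesgue: "rank \<in> lebesgue \<rightarrow>\<^sub>M lebesgue"
proof (rule completion.measurable_completion2)
  show "rank \<in> lebesgue \<rightarrow>\<^sub>M lborel"
    by (simp add: measurable_completion)
  show "null_sets lborel \<subseteq> null_sets (distr lebesgue lborel rank)"
  proof
    fix N :: "real set"
    assume N: "N \<in> null_sets lborel"
    have "AE y in distG g. rank y \<notin> N"
      using AE_not_in[OF N] by (rule AE_distG_rank)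
    moreover have "rank -` N \<in> sets lebesgue"
      using measurable_sets[OF rank_measurable_distG, of N] N by auto
    ultimately have "rank -` N \<in> null_sets lebesgue"
      using AE_iff_null[of "distG g" "\<lambda>y. rank y \<notin> N"] by (simp add: null_sets_distG vimage_def)
    then show "N \<in> null_sets (distr lebesgue lborel rank)"
      using N by (auto simp: null_sets_def emeasure_distr measurable_completion)
  qed
qed

lemma
  fixes \<psi> :: "real \<Rightarrow> real"
  assumes \<psi>_meas[measurable]: "\<psi> \<in> borel_measurable borel"
    and \<psi>_int: "integrable lborel (\<lambda>u. indicator {0..1} u * \<psi> u)"
  shows integrable_distG_rank_borel: "integrable (distG g) (\<lambda>y. \<psi> (rank y))"
    and integral_distG_rank_borel: "(\<integral>y. \<psi> (rank y) \<partial>distG g) = (\<integral>u. indicator {0..1} u * \<psi> u \<partial>lborel)"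
proof -
  have "integrable (distr (distG g) borel rank) \<psi>"
    using \<psi>_int by (simp add: distr_rank uniform_measure_unit_interval integrable_real_density)
  then show "integrable (distG g) (\<lambda>y. \<psi> (rank y))"
    by (simp add: integrable_distr_eq)
  have "(\<integral>y. \<psi> (rank y) \<partial>distG g) = integral\<^sup>L (distr (distG g) borel rank) \<psi>"
    by (rule integral_distr[symmetric]) simp_all
  then show "(\<integral>y. \<psi> (rank y) \<partial>distG g) = (\<integral>u. indicator {0..1} u * \<psi> u \<partial>lborel)"
    by (simp add: distr_rank uniform_measure_unit_interval integral_real_density)
qed

lemma
  fixes f :: "real \<Rightarrow> real"
  assumes f_int: "integrable lebesgue f" and f_supp: "\<And>u. u \<notin> {0..1} \<Longrightarrow> f u = 0"
  shows integrable_distG_rank: "integrable (distG g) (\<lambda>y. f (rank y))"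
    and integral_distG_rank: "(\<integral>y. f (rank y) \<partial>distG g) = integral\<^sup>L lebesgue f"
proof -
  have f_meas: "f \<in> borel_measurable lebesgue"
    using f_int by (rule borel_measurable_integrable)
  obtain \<psi> where \<psi>_meas: "\<psi> \<in> borel_measurable lborel" and f_\<psi>: "AE u in lborel. f u = \<psi> u"
    using completion_ex_borel_measurable_real[OF f_meas] by blast
  have \<psi>_borel[measurable]: "\<psi> \<in> borel_measurable borel"
    using \<psi>_meas by (simp add: measurable_lborel1)
  have ind_\<psi>_lebesgue: "(\<lambda>u. indicator {0..1} u * \<psi> u) \<in> borel_measurable lebesgue"
    by (intro borel_measurable_times borel_measurable_indicator measurable_completion[OF \<psi>_meas]) simp
  have f_indicator: "f u = indicator {0..1} u * f u" for u
    using f_supp[of u] by (auto simp: indicator_def)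
  have f_\<psi>_leb: "AE u in lebesgue. f u = indicator {0..1} u * \<psi> u"
    using AE_completion[OF f_\<psi>] by eventually_elim (metis f_indicator)
  have "integrable lebesgue (\<lambda>u. indicator {0..1} u * \<psi> u)"
    by (rule integrable_cong_AE_imp[OF f_int ind_\<psi>_lebesgue f_\<psi>_leb])
  then have ind_\<psi>_int: "integrable lborel (\<lambda>u. indicator {0..1} u * \<psi> u)"
    using \<psi>_meas by (simp add: integrable_completion)
  have f_rank_meas: "(\<lambda>y. f (rank y)) \<in> borel_measurable (distG g)"
    by (subst measurable_cong_sets[OF sets_distG refl])
      (rule measurable_compose[OF rank_measurable_lebesgue f_meas])
  have f_\<psi>_rank: "AE y in distG g. \<psi> (rank y) = f (rank y)"
    using f_\<psi> by (intro AE_distG_rank) (auto elim: eventually_mono)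
  show "integrable (distG g) (\<lambda>y. f (rank y))"
    by (rule integrable_cong_AE_imp[OF integrable_distG_rank_borel[OF \<psi>_borel ind_\<psi>_int]
          f_rank_meas f_\<psi>_rank])
  have "(\<integral>y. f (rank y) \<partial>distG g) = (\<integral>y. \<psi> (rank y) \<partial>distG g)"
    using f_\<psi>_rank by (intro integral_cong_AE) (auto simp: f_rank_meas elim: eventually_mono)
  also have "\<dots> = (\<integral>u. indicator {0..1} u * \<psi> u \<partial>lebesgue)"
    using \<psi>_meas by (simp add: integral_distG_rank_borel[OF \<psi>_borel ind_\<psi>_int] integral_completion)
  also have "\<dots> = integral\<^sup>L lebesgue f"
    using f_\<psi>_leb by (intro integral_cong_AE f_meas ind_\<psi>_lebesgue) (auto elim: eventually_mono)
  finally show "(\<integral>y. f (rank y) \<partial>distG g) = integral\<^sup>L lebesgue f" .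
qed

lemma
  fixes h :: "real \<Rightarrow> real"
  assumes "h \<in> borel_measurable lebesgue"
  shows integral_distG: "(\<integral>y. h y \<partial>distG g) = (\<integral>y. g y * h y \<partial>lebesgue)"
    and integrable_distG: "integrable (distG g) h \<longleftrightarrow> integrable lebesgue (\<lambda>y. g y * h y)"
  using assms g_pos by (simp_all add: distG_def integral_real_density integrable_real_density less_imp_le)

lemma rank_minus[simp]: "rank (- y) = rank y"
  by (simp add: rank_def)

lemma rank_less_1: "rank y < 1"
  by (simp add: rank_def cdf_abs_law_less_1)

lemma cdfG_diff_eq_rank: "0 < y \<Longrightarrow> cdfG g y - cdfG g (-y) = rank y"
  by (simp add: rank_def cdf_abs_law)

lemma ex_level_rank_ge_imp_abs_gt: "\<exists>x\<in>{0<..<1}. \<forall>y. 1 - x \<le> rank y \<longrightarrow> Q < \<bar>y\<bar>"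
proof -
  interpret A: real_distribution abs_law
    by (rule real_distribution_abs_law)
  define x where "x = (1 - cdf abs_law \<bar>Q\<bar>) / 2"
  have "x \<in> {0<..<1}"
    using cdf_abs_law_less_1[of "\<bar>Q\<bar>"]
      A.cdf_nonneg[of "\<bar>Q\<bar>"]
    by (auto simp: x_def)
  moreover have "\<forall>y. 1 - x \<le> rank y \<longrightarrow> Q < \<bar>y\<bar>"
  proof (intro allI impI)
    fix y assume "1 - x \<le> rank y"
    then have "cdf abs_law \<bar>Q\<bar> < cdf abs_law \<bar>y\<bar>"
      using cdf_abs_law_less_1[of "\<bar>Q\<bar>"] unfolding x_def rank_def by (simp add: field_simps)
    then have "\<bar>Q\<bar> < \<bar>y\<bar>"
      using A.cdf_nondecreasing[of "\<bar>y\<bar>" "\<bar>Q\<bar>"]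
      by (cases "\<bar>y\<bar> \<le> \<bar>Q\<bar>") auto
    then show "Q < \<bar>y\<bar>"
      by linarith
  qed
  ultimately show ?thesis
    by blast
qed

(* The integrand of pi_unif's numerator, extended to all y; the closed end at 1 - x matches the
   indicator there, while the denominator's open interval differs only by a null set. *)
definition tail_weight :: "(real \<Rightarrow> real) \<Rightarrow> real \<Rightarrow> real \<Rightarrow> real" where
  "tail_weight \<phi> x y = g y * (indicator {1-x..<1} (rank y) * \<phi> (rank y))"

lemma tail_weight_nonneg:
  "(\<And>u. 1 - x \<le> u \<Longrightarrow> u < 1 \<Longrightarrow> 0 \<le> \<phi> u) \<Longrightarrow> 0 \<le> tail_weight \<phi> x y"
  using g_pos[of y] by (auto simp: tail_weight_def indicator_def)

lemma
  fixes \<phi> :: "real \<Rightarrow> real"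
  assumes x: "0 < x" "x < 1" and \<phi>_int: "set_integrable lebesgue {1-x..<1} \<phi>"
  shows integrable_tail_weight: "integrable lebesgue (tail_weight \<phi> x)"
    and integral_tail_weight: "integral\<^sup>L lebesgue (tail_weight \<phi> x) = (LINT u:{1-x<..<1}|lebesgue. \<phi> u)"
    and set_integral_tail_weight: "(LINT y:{0<..}|distG g. \<phi> (cdfG g y - cdfG g (-y)) *
          indicator {t. 1 - x \<le> cdfG g t - cdfG g (-t)} y) = (LINT y:{0<..}|lebesgue. tail_weight \<phi> x y)"
proof -
  define f where "f u = indicator {1-x..<1} u * \<phi> u" for u
  have f_int: "integrable lebesgue f"
    using \<phi>_int by (simp add: set_integrable_def f_def[abs_def])
  have f_supp: "f u = 0" if "u \<notin> {0..1}" for u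
    using x that by (auto simp: f_def indicator_def)
  have f_rank_meas: "(\<lambda>y. f (rank y)) \<in> borel_measurable lebesgue"
    using measurable_compose[OF rank_measurable_lebesgue borel_measurable_integrable[OF f_int]] .
  have weight_eq: "tail_weight \<phi> x = (\<lambda>y. g y * f (rank y))"
    by (simp add: tail_weight_def f_def fun_eq_iff)
  show "integrable lebesgue (tail_weight \<phi> x)"
    using integrable_distG_rank[OF f_int f_supp] f_rank_meas by (simp add: integrable_distG weight_eq)
  have \<phi>_int_open: "set_integrable lebesgue {1-x<..<1} \<phi>"
    by (rule set_integrable_subset[OF \<phi>_int]) auto
  have "(LINT u:{1-x<..<1}|lebesgue. \<phi> u) = (LINT u:{1-x..<1}|lebesgue. \<phi> u)"
  proof (rule set_integral_cong_set)
    show "AE u in lebesgue. u \<in> {1-x..<1} \<longleftrightarrow> u \<in> {1-x<..<1}"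
      using AE_not_in[of "{1-x}" lebesgue] by (auto simp: null_sets_completionI elim!: eventually_mono)
  qed (use \<phi>_int \<phi>_int_open in \<open>simp_all add: set_borel_measurable_def set_integrable_def
      borel_measurable_integrable\<close>)
  also have "\<dots> = integral\<^sup>L lebesgue f"
    by (simp add: set_lebesgue_integral_def f_def[abs_def])
  also have "\<dots> = integral\<^sup>L lebesgue (tail_weight \<phi> x)"
    using integral_distG_rank[OF f_int f_supp] f_rank_meas by (simp add: integral_distG weight_eq)
  finally show "integral\<^sup>L lebesgue (tail_weight \<phi> x) = (LINT u:{1-x<..<1}|lebesgue. \<phi> u)" ..
  have "(LINT y:{0<..}|distG g. \<phi> (cdfG g y - cdfG g (-y)) * indicator {t. 1 - x \<le> cdfG g t - cdfG g (-t)} y)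
      = (LINT y:{0<..}|distG g. f (rank y))"
    unfolding set_lebesgue_integral_def using rank_less_1
    by (intro Bochner_Integration.integral_cong refl)
      (auto simp: cdfG_diff_eq_rank indicator_def f_def)
  also have "\<dots> = (LINT y:{0<..}|lebesgue. tail_weight \<phi> x y)"
    unfolding set_lebesgue_integral_def weight_eq
    by (subst integral_distG)
      (auto simp: mult_ac intro!: borel_measurable_times borel_measurable_indicator f_rank_meas)
  finally show "(LINT y:{0<..}|distG g. \<phi> (cdfG g y - cdfG g (-y)) *
      indicator {t. 1 - x \<le> cdfG g t - cdfG g (-t)} y) = (LINT y:{0<..}|lebesgue. tail_weight \<phi> x y)" .
qed

lemma odds_pi_unif_ge:
  fixes \<phi> :: "real \<Rightarrow> real" and c x :: real
  assumes x: "0 < x" "x < 1"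
    and \<phi>_nonneg: "\<And>u. 1 - x \<le> u \<Longrightarrow> u < 1 \<Longrightarrow> 0 \<le> \<phi> u"
    and \<phi>_int: "set_integrable lebesgue {1-x..<1} \<phi>"
    and D_pos: "0 < (LINT u:{1-x<..<1}|lebesgue. \<phi> u)"
    and dominated: "\<And>y. 0 < y \<Longrightarrow> 1 - x \<le> rank y \<Longrightarrow> c * g (-y) \<le> g y"
  shows "ereal c \<le> odds (pi_unif \<phi> g x)"
proof -
  let ?w = "tail_weight \<phi> x"
  define N where "N = (LINT y:{0<..}|lebesgue. ?w y)"
  define M where "M = (LINT y:{0<..}|lebesgue. ?w (-y))"
  have w_int: "integrable lebesgue ?w"
    using x \<phi>_int by (rule integrable_tail_weight)
  have D_eq: "(LINT u:{1-x<..<1}|lebesgue. \<phi> u) = N + M"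
    using integral_tail_weight[OF x \<phi>_int] integral_lebesgue_split_reflect[OF w_int]
    by (simp add: N_def M_def)
  have "0 \<le> M"
    unfolding M_def set_lebesgue_integral_def
    by (intro Bochner_Integration.integral_nonneg) (simp add: tail_weight_nonneg \<phi>_nonneg)
  moreover have "0 < N + M"
    using D_pos D_eq by simp
  moreover have "c * M \<le> N"
  proof -
    have "c * ?w (-y) \<le> ?w y" if "0 < y" for y
      using dominated[OF that] g_pos[of y] \<phi>_nonneg[of "rank y"]
      by (auto simp: tail_weight_def indicator_def mult.assoc[symmetric] intro!: mult_right_mono)
    moreover have "set_integrable lebesgue {0<..} (\<lambda>y. ?w (-y))" "set_integrable lebesgue {0<..} ?w"
      using integrable_mult_indicator[OF _ lebesgue_integrable_real_affine[OF w_int, of "-1" 0]]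
        integrable_mult_indicator[OF _ w_int]
      by (simp_all add: set_integrable_def)
    ultimately have "(LINT y:{0<..}|lebesgue. c * ?w (-y)) \<le> N"
      unfolding N_def by (intro set_integral_mono) auto
    then show ?thesis
      by (simp add: M_def)
  qed
  ultimately have "ereal c \<le> odds (N / (N + M))"
    by (rule le_odds_div_add)
  also have "N / (N + M) = pi_unif \<phi> g x"
    by (simp add: pi_unif_def set_integral_tail_weight[OF x \<phi>_int] D_eq N_def)
  finally show ?thesis .
qed

lemma Gamma_unif_ge:
  fixes \<phi> :: "real \<Rightarrow> real" and c :: real
  assumes \<phi>_nonneg: "\<forall>u\<in>{0<..<1}. 0 \<le> \<phi> u"
    and \<phi>_int: "\<And>x. 0 < x \<Longrightarrow> x < 1 \<Longrightarrow> set_integrable lebesgue {1-x<..<1} \<phi>"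
    and D_pos: "\<forall>x\<in>{0<..<1}. 0 < (LINT u:{1-x<..<1}|lebesgue. \<phi> u)"
    and ratio: "eventually (\<lambda>q. c < g q / g (-q)) at_top"
  shows "ereal c \<le> Gamma_unif \<phi> g"
proof -
  obtain Q where Q: "\<And>q. Q \<le> q \<Longrightarrow> c < g q / g (-q)"
    using ratio by (auto simp: eventually_at_top_linorder)
  obtain x where x: "0 < x" "x < 1" and tail: "\<And>y. 1 - x \<le> rank y \<Longrightarrow> Q < \<bar>y\<bar>"
    using ex_level_rank_ge_imp_abs_gt[of Q] by auto
  have "set_integrable lebesgue {1-x..<1} \<phi>"
    using x by (intro set_integrable_subset[OF \<phi>_int[of "(1 + x) / 2"]]) (auto simp: field_simps)
  moreover have "c * g (-y) \<le> g y" if "0 < y" "1 - x \<le> rank y" for y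
    using Q[of y] tail[OF that(2)] that(1) g_pos[of "-y"] by (simp add: less_divide_eq)
  ultimately have "ereal c \<le> odds (pi_unif \<phi> g x)"
    using x \<phi>_nonneg D_pos by (intro odds_pi_unif_ge) auto
  also have "\<dots> \<le> Gamma_unif \<phi> g"
    unfolding Gamma_unif_def using x by (intro SUP_upper) auto
  finally show ?thesis .
qed

end

theorem theorem3:
  fixes \<phi> g :: "real \<Rightarrow> real"
  assumes phi_nonneg: "\<forall>y\<in>{0<..<1}. \<phi> y \<ge> 0"
    and P1: "set_integrable lebesgue {0<..<1} (\<lambda>y. (\<phi> y)\<^sup>2)"
    and P2: "{y\<in>{0<..<1}. \<not> isCont \<phi> y} \<in> null_sets lebesgue"
    and P3: "\<exists>a\<in>{0..<1/2}. antimono_on {0<..<a} \<phi> \<and> mono_on {1-a<..<1} \<phi>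
                  \<and> bounded (\<phi> ` {a<..<1-a})"
    and P4: "\<forall>x\<in>{0<..<1}. (LINT y:{1-x<..<1}|lebesgue. \<phi> y) > 0"
    and g_meas: "g \<in> borel_measurable lebesgue"
    and g_pos: "\<forall>x. g x > 0"
    and g_prob: "emeasure (distG g) UNIV = 1"
  shows "Gamma_unif \<phi> g \<ge> Liminf at_top (\<lambda>q. ereal (g q / g (-q)))"
proof -
  interpret positive_density g
    using g_meas g_pos g_prob by unfold_locales auto
  (* A nonzero Bochner integral forces integrability, so P4 supplies it. *)
  have \<phi>_int: "set_integrable lebesgue {1-x<..<1} \<phi>" if "0 < x" "x < 1" for x
  proof (rule set_integrable_of_set_integral_nonzero)
    have "0 < (LINT y:{1-x<..<1}|lebesgue. \<phi> y)"
      using P4 that by simp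
    then show "(LINT y:{1-x<..<1}|lebesgue. \<phi> y) \<noteq> 0"
      by simp
  qed
  show ?thesis
  proof (rule dense_le)
    fix y assume y: "y < Liminf at_top (\<lambda>q. ereal (g q / g (-q)))"
    then have ratio: "eventually (\<lambda>q. y < ereal (g q / g (-q))) at_top"
      by (rule less_LiminfD)
    show "y \<le> Gamma_unif \<phi> g"
    proof (cases y)
      case (real c)
      then show ?thesis
        using ratio phi_nonneg P4 \<phi>_int by (auto intro!: Gamma_unif_ge)
    qed (use y in auto)
  qed
qed

end
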